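(* Let $U\in\mathcal U_n$ with order $\prec$, let $w=q(U)$ and let $f=f_U$ be the associated permutation. Define $\prec_f$ on $\{1,\dots,n\}$ by $i\prec_f j$ iff $f^{-1}(i)\prec_{P(w)}f^{-1}(j)$. Then $\prec_f$ coincides with $\prec$.
   Context: A unit interval order on $\{1,\dots,n\}$ is a relation $\prec$ such that there are closed intervals $I_1,\dots,I_n$ of length $1$ in $\mathbb R$, numbered from left to right, with $i\prec j$ iff $I_i$ lies strictly to the left of $I_j$; $\mathcal U_n$ is the set of these. For a sequence $w=(w_1,\dots,w_n)$ of nonnegative integers, $P(w)$ is the poset on $\{1,\dots,n\}$ with order $\prec_{P(w)}$: $i\prec_{P(w)} j$ iff $w_j-w_i\ge2$, or $w_j-w_i=1$ and $i<j$. Levels: $\ell(1)=0$ and $\ell(j)=\max_{i\prec j}\ell(i)+1$ for $j\ge2$, with $\ell(j)=0$ if no $i\prec j$. Algorithm: $q_1=(0)$; given $q_{i-1}$, let $C_i$ be the number of $k\prec i$ with $\ell(k)=\ell(i)-1$, and obtain $q_i$ by inserting a letter $\ell(i)$ into $q_{i-1}$ directly after the (possibly empty) run of letters $\ell(i)$ immediately following the $C_i$-th occurrence of the letter $\ell(i)-1$ (the 0-th occurrence meaning the start of the word); $q(U)=q_n$. The permutation $f_U$ of $\{1,\dots,n\}$: with $w=q(U)$, number the positions $i$ with $w_i=0$ from left to right starting at $1$, then continue numbering the positions with $w_i=1$ from left to right, then those with $w_i=2$, and so on; $f_U(i)$ is the number assigned to position $i$. *)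

theory Defs
  imports Complex_Main
begin

text \<open>Relations on {1..n} are represented as predicates on nat, false outside {1..n}.\<close>

text \<open>Unit interval orders: closed unit intervals [x i, x i + 1], numbered from left
  to right (left endpoints non-decreasing), with i prec j iff interval i lies strictly
  to the left of interval j.\<close>
definition unit_interval_order :: "nat \<Rightarrow> (nat \<Rightarrow> nat \<Rightarrow> bool) \<Rightarrow> bool" where
  "unit_interval_order n R \<longleftrightarrow>
     (\<exists>x :: nat \<Rightarrow> real.
        (\<forall>i j. 1 \<le> i \<and> i \<le> j \<and> j \<le> n \<longrightarrow> x i \<le> x j) \<and>
        (\<forall>i j. R i j \<longleftrightarrow> i \<in> {1..n} \<and> j \<in> {1..n} \<and> x i + 1 < x j))"

text \<open>Levels. In a unit interval order, i prec j implies i < j, so only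
  predecessors i < j need to be considered.\<close>
function level :: "(nat \<Rightarrow> nat \<Rightarrow> bool) \<Rightarrow> nat \<Rightarrow> nat" where
  "level R j =
     (let L = [Suc (level R i). i \<leftarrow> filter (\<lambda>i. R i j) [0..<j]]
      in if L = [] then 0 else Max (set L))"
  by pat_completeness auto
termination
  by (relation "measure snd") auto

declare level.simps [simp del]

definition after_occ :: "nat \<Rightarrow> nat \<Rightarrow> nat list \<Rightarrow> nat" where
  "after_occ c a w =
     (if c = 0 then 0 else Suc (filter (\<lambda>k. w ! k = a) [0..<length w] ! (c - 1)))"

definition insert_step :: "nat \<Rightarrow> nat \<Rightarrow> nat \<Rightarrow> nat list \<Rightarrow> nat list" where
  "insert_step c a b w =
     (let p = after_occ c a w;
          r = length (takeWhile (\<lambda>x. x = b) (drop p w))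
      in take (p + r) w @ [b] @ drop (p + r) w)"

definition Ccount :: "(nat \<Rightarrow> nat \<Rightarrow> bool) \<Rightarrow> nat \<Rightarrow> nat" where
  "Ccount R i = card {k. k < i \<and> R k i \<and> Suc (level R k) = level R i}"

fun qseq :: "(nat \<Rightarrow> nat \<Rightarrow> bool) \<Rightarrow> nat \<Rightarrow> nat list" where
  "qseq R 0 = []"
| "qseq R (Suc 0) = [0]"
| "qseq R (Suc (Suc m)) =
     insert_step (Ccount R (Suc (Suc m))) (level R (Suc (Suc m)) - 1)
                 (level R (Suc (Suc m))) (qseq R (Suc m))"

definition qU :: "nat \<Rightarrow> (nat \<Rightarrow> nat \<Rightarrow> bool) \<Rightarrow> nat list" where
  "qU n R = qseq R n"

text \<open>The poset P(w); the word w = (w_1,...,w_n) is stored 0-indexed as a list.\<close>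
definition Pw :: "nat list \<Rightarrow> nat \<Rightarrow> nat \<Rightarrow> bool" where
  "Pw w i j \<longleftrightarrow> i \<in> {1..length w} \<and> j \<in> {1..length w} \<and>
     (int (w ! (j - 1)) - int (w ! (i - 1)) \<ge> 2 \<or>
      (int (w ! (j - 1)) - int (w ! (i - 1)) = 1 \<and> i < j))"

text \<open>The numbering of positions: first the positions carrying 0 from left to right,
  then those carrying 1, etc. Position i gets number
  #{k : w_k < w_i} + #{k \<le> i : w_k = w_i}.\<close>
definition fperm :: "nat list \<Rightarrow> nat \<Rightarrow> nat" where
  "fperm w i = card {k \<in> {1..length w}. w ! (k - 1) < w ! (i - 1)}
             + card {k \<in> {1..i}. w ! (k - 1) = w ! (i - 1)}"

definition fU :: "nat \<Rightarrow> (nat \<Rightarrow> nat \<Rightarrow> bool) \<Rightarrow> nat \<Rightarrow> nat" where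
  "fU n R = fperm (qU n R)"

end

theory Submission
  imports Defs
begin

(* In a unit interval order the predecessors of j are exactly 1, ..., npred j for a monotone
   npred, so level j = level (npred j) + 1 and levels are monotone. Run the insertion
   algorithm on elements instead of letters, keeping the list of 1, ..., m in the positions
   of q_m. Three invariants hold: elements of equal level occur in increasing order; an
   element x of level l occurs before an element y of level l + 1 iff x <= npred y; and
   between npred y and an element y of the current top level only top-level elements occur.
   The third one pins down the insertion point of m + 1 as the place where the first two
   persist. By the first invariant and monotonicity of levels f_U maps the position of y to
   y, and by the second P(q(U)) transported along f_U is the order itself. *)

definition insert_at :: "nat \<Rightarrow> 'a \<Rightarrow> 'a list \<Rightarrow> 'a list" where
  "insert_at k x xs = take k xs @ x # drop k xs"

lemma map_insert_at: "map f (insert_at k x xs) = insert_at k (f x) (map f xs)"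
  by (simp add: insert_at_def take_map drop_map)

lemma set_insert_at [simp]: "set (insert_at k x xs) = insert x (set xs)"
  using set_append[of "take k xs" "drop k xs"] by (auto simp: insert_at_def)

lemma distinct_insert_at [simp]: "distinct (insert_at k x xs) \<longleftrightarrow> x \<notin> set xs \<and> distinct xs"
proof -
  have d: "distinct xs \<longleftrightarrow>
      distinct (take k xs) \<and> distinct (drop k xs) \<and> set (take k xs) \<inter> set (drop k xs) = {}"
    using distinct_append[of "take k xs" "drop k xs"] by (simp only: append_take_drop_id)
  have s: "x \<in> set xs \<longleftrightarrow> x \<in> set (take k xs) \<or> x \<in> set (drop k xs)"
    using set_append[of "take k xs" "drop k xs"] by (simp only: append_take_drop_id Un_iff)
  show ?thesis unfolding insert_at_def distinct_append distinct.simps(2) d s by auto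
qed

fun occurs_before :: "'a list \<Rightarrow> 'a \<Rightarrow> 'a \<Rightarrow> bool" where
  "occurs_before [] x y \<longleftrightarrow> False"
| "occurs_before (z # zs) x y \<longleftrightarrow> z = x \<and> y \<in> set zs \<or> occurs_before zs x y"

lemma occurs_before_append:
  "occurs_before (xs @ ys) x y \<longleftrightarrow>
     occurs_before xs x y \<or> occurs_before ys x y \<or> x \<in> set xs \<and> y \<in> set ys"
  by (induction xs) auto

lemma occurs_before_insert_at:
  "occurs_before (insert_at k z xs) x y \<longleftrightarrow>
     occurs_before xs x y \<or> y = z \<and> x \<in> set (take k xs) \<or> x = z \<and> y \<in> set (drop k xs)"
proof -
  have "occurs_before xs x y \<longleftrightarrow> occurs_before (take k xs) x y \<or> occurs_before (drop k xs) x y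
      \<or> x \<in> set (take k xs) \<and> y \<in> set (drop k xs)"
    using occurs_before_append[of "take k xs" "drop k xs"] by simp
  then show ?thesis by (auto simp: insert_at_def occurs_before_append)
qed

lemma occurs_before_take_drop:
  "x \<in> set (take k xs) \<Longrightarrow> y \<in> set (drop k xs) \<Longrightarrow> occurs_before xs x y"
  using occurs_before_append[of "take k xs" "drop k xs"] by simp

lemma occurs_before_drop: "occurs_before (drop k xs) x y \<Longrightarrow> occurs_before xs x y"
  using occurs_before_append[of "take k xs" "drop k xs"] by simp

lemma occurs_before_hd: "x \<in> set xs \<Longrightarrow> x \<noteq> hd xs \<Longrightarrow> occurs_before xs (hd xs) x"
  by (cases xs) auto

lemma occurs_before_in_set: "occurs_before xs x y \<Longrightarrow> x \<in> set xs \<and> y \<in> set xs"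
  by (induction xs) auto

lemma occurs_before_asym: "distinct xs \<Longrightarrow> occurs_before xs x y \<Longrightarrow> \<not> occurs_before xs y x"
  by (induction xs) (auto dest: occurs_before_in_set)

lemma occurs_before_nth_iff:
  "distinct xs \<Longrightarrow> t < length xs \<Longrightarrow> u < length xs \<Longrightarrow> occurs_before xs (xs ! t) (xs ! u) \<longleftrightarrow> t < u"
proof (induction xs arbitrary: t u)
  case (Cons z zs)
  then show ?case
    by (cases t; cases u) (auto simp: nth_eq_iff_index_eq dest: occurs_before_in_set)
qed simp

lemma occurs_before_nth_iff_take:
  assumes "distinct xs" "v < length xs"
  shows "occurs_before xs y (xs ! v) \<longleftrightarrow> y \<in> set (take v xs)"
proof -
  have split: "xs = take v xs @ xs ! v # drop (Suc v) xs" using assms(2) by (rule id_take_nth_drop)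
  then have "distinct (take v xs @ xs ! v # drop (Suc v) xs)" using assms(1) by simp
  then have "xs ! v \<notin> set (take v xs)" "xs ! v \<notin> set (drop (Suc v) xs)" by auto
  then show ?thesis
    by (subst split) (auto simp: occurs_before_append dest: occurs_before_in_set)
qed

definition run_end :: "nat \<Rightarrow> 'a \<Rightarrow> 'a list \<Rightarrow> nat" where
  "run_end p b w = p + length (takeWhile (\<lambda>x. x = b) (drop p w))"

lemma insert_step_eq_insert_at:
  "insert_step c a b w = insert_at (run_end (after_occ c a w) b w) b w"
  by (simp add: insert_step_def insert_at_def run_end_def Let_def)

lemma run_end_map:
  "run_end p b (map f xs) = p + length (takeWhile (\<lambda>y. f y = b) (drop p xs))"
  by (simp add: run_end_def takeWhile_map drop_map comp_def)

lemma take_run_end_map: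
  "take (run_end p b (map f xs)) xs = take p xs @ takeWhile (\<lambda>y. f y = b) (drop p xs)"
proof -
  have "take (run_end p b (map f xs)) xs =
      take p xs @ take (length (takeWhile (\<lambda>y. f y = b) (drop p xs))) (drop p xs)"
    by (simp add: run_end_map take_add)
  then show ?thesis by (simp only: takeWhile_eq_take[symmetric])
qed

lemma drop_run_end_map:
  "drop (run_end p b (map f xs)) xs = dropWhile (\<lambda>y. f y = b) (drop p xs)"
proof -
  have "drop (run_end p b (map f xs)) xs =
      drop (length (takeWhile (\<lambda>y. f y = b) (drop p xs))) (drop p xs)"
    by (simp add: run_end_map add.commute)
  then show ?thesis by (simp only: dropWhile_eq_drop)
qed

lemma after_occ_map:
  assumes "distinct xs" "v < length xs" "f (xs ! v) = b" "card {y \<in> set (take v xs). f y = b} = c"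
  shows "after_occ (Suc c) b (map f xs) = Suc v"
proof -
  let ?P = "\<lambda>k. map f xs ! k = b"
  have "[0..<length xs] = [0..<v] @ v # [Suc v..<length xs]"
    using assms(2) by (metis le0 le_add_diff_inverse less_imp_le_nat upt_add_eq_append upt_conv_Cons)
  then have split: "filter ?P [0..<length xs] = filter ?P [0..<v] @ v # filter ?P [Suc v..<length xs]"
    using assms(2,3) by simp
  have "filter ?P [0..<v] = filter (\<lambda>k. f (xs ! k) = b) [0..<v]"
    using assms(2) by (intro filter_cong) auto
  moreover have "take v xs = map (\<lambda>k. xs ! k) [0..<v]"
    using assms(2) by (simp add: list_eq_iff_nth_eq)
  ultimately have "length (filter ?P [0..<v]) = length (filter (\<lambda>y. f y = b) (take v xs))"
    by (simp add: length_filter_map comp_def)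
  also have "\<dots> = c"
    using assms(1,4) by (simp add: distinct_length_filter Int_def conj_commute)
  finally show ?thesis using split by (simp add: after_occ_def nth_append)
qed

lemma card_positions_eq_card_elems:
  assumes "distinct xs"
  shows "card {k \<in> {1..length xs}. P (xs ! (k - 1))} = card {x \<in> set xs. P x}"
proof -
  have "{x \<in> set xs. P x} = (\<lambda>k. xs ! (k - 1)) ` {k \<in> {1..length xs}. P (xs ! (k - 1))}"
  proof (intro equalityI subsetI)
    fix x assume "x \<in> {x \<in> set xs. P x}"
    then obtain i where "i < length xs" "xs ! i = x" "P x" by (auto simp: in_set_conv_nth)
    then show "x \<in> (\<lambda>k. xs ! (k - 1)) ` {k \<in> {1..length xs}. P (xs ! (k - 1))}"
      by (intro image_eqI[of _ _ "Suc i"]) auto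
  qed auto
  moreover have "inj_on (\<lambda>k. xs ! (k - 1)) {k \<in> {1..length xs}. P (xs ! (k - 1))}"
    using assms by (intro inj_onI) (auto simp: nth_eq_iff_index_eq)
  ultimately show ?thesis by (simp add: card_image)
qed

context
  fixes xs :: "nat list" and f :: "nat \<Rightarrow> nat"
  assumes distinct: "distinct xs" and elems: "set xs = {1..length xs}"
    and sorted: "\<And>t u. t < length xs \<Longrightarrow> u < length xs \<Longrightarrow>
        f (xs ! t) < f (xs ! u) \<or> f (xs ! t) = f (xs ! u) \<and> t < u \<Longrightarrow> xs ! t < xs ! u"
begin

lemma fperm_map_eq_nth:
  assumes t: "t < length xs"
  shows "fperm (map f xs) (Suc t) = xs ! t"
proof -
  define y where "y = xs ! t"
  let ?N = "length xs"
  have le_iff: "xs ! u \<le> y \<longleftrightarrow> f (xs ! u) < f y \<or> f (xs ! u) = f y \<and> u \<le> t" if "u < ?N" for u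
    using sorted[OF that t] sorted[OF t that] that t unfolding y_def
    by (metis le_less_linear less_imp_le not_less_iff_gr_or_eq le_neq_implies_less)
  let ?lt = "{k \<in> {1..?N}. f (xs ! (k - 1)) < f y}" and ?eq = "{k \<in> {1..Suc t}. f (xs ! (k - 1)) = f y}"
  have "fperm (map f xs) (Suc t) = card ?lt + card ?eq"
    unfolding fperm_def y_def using t by (intro arg_cong2[where f="(+)"] arg_cong[where f=card]) auto
  also have "\<dots> = card (?lt \<union> ?eq)"
    by (intro card_Un_disjoint[symmetric]) auto
  also have "?lt \<union> ?eq = {k \<in> {1..?N}. xs ! (k - 1) \<le> y}"
    using le_iff t by fastforce
  finally have "fperm (map f xs) (Suc t) = card {k \<in> {1..?N}. xs ! (k - 1) \<le> y}" .
  also have "\<dots> = card {x \<in> set xs. x \<le> y}"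
    using distinct by (rule card_positions_eq_card_elems)
  also have "{x \<in> set xs. x \<le> y} = {1..y}"
    using elems nth_mem[OF t] by (auto simp: y_def)
  finally show ?thesis by (simp add: y_def)
qed

lemma inv_into_fperm_map:
  assumes "u < length xs"
  shows "inv_into {1..length xs} (fperm (map f xs)) (xs ! u) = Suc u"
proof (rule inv_into_f_eq)
  have eq: "fperm (map f xs) k = xs ! (k - 1)" if "k \<in> {1..length xs}" for k
    using fperm_map_eq_nth[of "k - 1"] that by auto
  have "inj_on (\<lambda>k. xs ! (k - 1)) {1..length xs}"
    using distinct by (intro inj_onI) (auto simp: nth_eq_iff_index_eq)
  then show "inj_on (fperm (map f xs)) {1..length xs}"
    using inj_on_cong[of "{1..length xs}" "fperm (map f xs)" "\<lambda>k. xs ! (k - 1)"] eq by blast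
qed (use assms fperm_map_eq_nth in auto)

end

lemma Pw_map_Suc_iff:
  "t < length xs \<Longrightarrow> u < length xs \<Longrightarrow>
    Pw (map f xs) (Suc t) (Suc u) \<longleftrightarrow> f (xs ! t) + 2 \<le> f (xs ! u) \<or> f (xs ! u) = Suc (f (xs ! t)) \<and> t < u"
  by (auto simp: Pw_def)

lemma level_eq_Max:
  "level R j = (if {i. i < j \<and> R i j} = {} then 0 else Max ((\<lambda>i. Suc (level R i)) ` {i. i < j \<and> R i j}))"
proof -
  have "set (filter (\<lambda>i. R i j) [0..<j]) = {i. i < j \<and> R i j}" by auto
  then show ?thesis
    by (subst level.simps) (auto simp: Let_def filter_empty_conv simp del: set_filter)
qed

definition insertion_point :: "(nat \<Rightarrow> nat \<Rightarrow> bool) \<Rightarrow> nat \<Rightarrow> nat list \<Rightarrow> nat" where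
  "insertion_point R j w = run_end (after_occ (Ccount R j) (level R j - 1) w) (level R j) w"

fun arrangement :: "(nat \<Rightarrow> nat \<Rightarrow> bool) \<Rightarrow> nat \<Rightarrow> nat list" where
  "arrangement R 0 = []"
| "arrangement R (Suc 0) = [1]"
| "arrangement R (Suc (Suc m)) =
     insert_at (insertion_point R (Suc (Suc m)) (map (level R) (arrangement R (Suc m))))
       (Suc (Suc m)) (arrangement R (Suc m))"

lemma qseq_eq_map_level_arrangement:
  "level R 1 = 0 \<Longrightarrow> qseq R m = map (level R) (arrangement R m)"
  by (induction R m rule: qseq.induct)
     (simp_all add: insert_step_eq_insert_at insertion_point_def map_insert_at)

locale uio_npred =
  fixes n :: nat and R :: "nat \<Rightarrow> nat \<Rightarrow> bool" and npred :: "nat \<Rightarrow> nat"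
  assumes R_iff: "R i j \<longleftrightarrow> 1 \<le> i \<and> i \<le> npred j \<and> j \<in> {1..n}"
    and npred_less: "j \<in> {1..n} \<Longrightarrow> npred j < j"
    and npred_mono: "1 \<le> i \<Longrightarrow> i \<le> j \<Longrightarrow> j \<le> n \<Longrightarrow> npred i \<le> npred j"
begin

abbreviation lev :: "nat \<Rightarrow> nat" where
  "lev \<equiv> level R"

lemma level_eq_Max_npred:
  assumes j: "j \<in> {1..n}"
  shows "lev j = (if npred j = 0 then 0 else Max ((\<lambda>i. Suc (lev i)) ` {1..npred j}))"
proof -
  have "{i. i < j \<and> R i j} = {1..npred j}" using npred_less[OF j] j by (auto simp: R_iff)
  then show ?thesis by (subst level_eq_Max) simp
qed

lemma level_one [simp]: "lev 1 = 0"
  by (subst level_eq_Max) (auto simp: R_iff)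

lemma level_mono:
  assumes ij: "1 \<le> i" "i \<le> j" "j \<le> n"
  shows "lev i \<le> lev j"
proof (cases "npred i = 0")
  case False
  from ij have "npred i \<le> npred j" by (rule npred_mono)
  then have "Max ((\<lambda>i. Suc (lev i)) ` {1..npred i}) \<le> Max ((\<lambda>i. Suc (lev i)) ` {1..npred j})"
    using False by (intro Max_mono image_mono) auto
  then show ?thesis using ij False \<open>npred i \<le> npred j\<close> by (simp add: level_eq_Max_npred)
qed (use ij in \<open>simp add: level_eq_Max_npred\<close>)

lemma level_eq:
  assumes j: "j \<in> {1..n}"
  shows "lev j = (if npred j = 0 then 0 else Suc (lev (npred j)))"
proof -
  have "Max ((\<lambda>i. Suc (lev i)) ` {1..npred j}) = Suc (lev (npred j))" if "npred j \<noteq> 0"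
    using that npred_less[OF j] j by (intro Max_eqI) (auto intro: level_mono)
  then show ?thesis using j by (simp add: level_eq_Max_npred)
qed

definition arrangement_inv :: "nat \<Rightarrow> nat list \<Rightarrow> bool" where
  "arrangement_inv m E \<longleftrightarrow> distinct E \<and> set E = {1..m} \<and>
     (\<forall>x\<in>set E. \<forall>y\<in>set E. lev x = lev y \<and> x < y \<longrightarrow> occurs_before E x y) \<and>
     (\<forall>x\<in>set E. \<forall>y\<in>set E. lev y = Suc (lev x) \<longrightarrow> (occurs_before E x y \<longleftrightarrow> x \<le> npred y)) \<and>
     (\<forall>x y. occurs_before E x y \<and> lev y = lev m \<and> lev x \<noteq> lev m \<longrightarrow>
        x = npred y \<or> occurs_before E x (npred y))"

lemma arrangement_invD:
  assumes "arrangement_inv m E"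
  shows "distinct E" "set E = {1..m}"
    and "\<And>x y. x \<in> set E \<Longrightarrow> y \<in> set E \<Longrightarrow> lev x = lev y \<Longrightarrow> x < y \<Longrightarrow> occurs_before E x y"
    and "\<And>x y. x \<in> set E \<Longrightarrow> y \<in> set E \<Longrightarrow> lev y = Suc (lev x) \<Longrightarrow>
           occurs_before E x y \<longleftrightarrow> x \<le> npred y"
    and "\<And>x y. occurs_before E x y \<Longrightarrow> lev y = lev m \<Longrightarrow> lev x \<noteq> lev m \<Longrightarrow>
           x = npred y \<or> occurs_before E x (npred y)"
  using assms unfolding arrangement_inv_def by blast+

lemma occurs_before_same_level_iff:
  assumes "arrangement_inv m E" "x \<in> set E" "y \<in> set E" "lev x = lev y"
  shows "occurs_before E x y \<longleftrightarrow> x < y"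
proof
  note I = arrangement_invD[OF assms(1)]
  assume before: "occurs_before E x y"
  show "x < y"
  proof (rule ccontr)
    assume "\<not> x < y"
    then have "y = x \<or> y < x" by auto
    then have "occurs_before E y x" using before I(3) assms(2-4) by auto
    then show False using before occurs_before_asym[OF I(1)] by blast
  qed
qed (use arrangement_invD(3)[OF assms(1)] assms in auto)

lemma Ccount_eq:
  assumes j: "j \<in> {1..n}" and "npred j \<noteq> 0"
  shows "Ccount R j = Suc (card {y \<in> {1..<npred j}. lev y = lev (npred j)})"
proof -
  have "{k. k < j \<and> R k j \<and> Suc (lev k) = lev j} = insert (npred j) {y \<in> {1..<npred j}. lev y = lev (npred j)}"
    using assms npred_less[OF j] by (auto simp: R_iff level_eq[OF j])
  then show ?thesis by (simp add: Ccount_def)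
qed

context
  fixes m E assumes inv: "arrangement_inv m E" and m: "1 \<le> m" "Suc m \<le> n"
begin

lemma levels_le:
  assumes "x \<in> set E"
  shows "lev x \<le> lev m" "lev m \<le> lev (Suc m)"
  using assms arrangement_invD(2)[OF inv] m by (auto intro: level_mono)

lemma occurs_before_insert_at_new_iff:
  "x \<noteq> Suc m \<Longrightarrow> occurs_before (insert_at k (Suc m) E) x (Suc m) \<longleftrightarrow> x \<in> set (take k E)"
  using arrangement_invD(2)[OF inv] occurs_before_in_set by (fastforce simp: occurs_before_insert_at)

context
  fixes k
  assumes level_top: "\<And>x. x \<in> set E \<Longrightarrow> lev x = lev (Suc m) \<Longrightarrow> x \<in> set (take k E)"
    and level_below: "\<And>x. x \<in> set E \<Longrightarrow> Suc (lev x) = lev (Suc m) \<Longrightarrow>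
        x \<in> set (take k E) \<longleftrightarrow> x \<le> npred (Suc m)"
    and run: "\<And>x. x \<in> set (take k E) \<Longrightarrow> lev x \<noteq> lev (Suc m) \<Longrightarrow>
        x = npred (Suc m) \<or> occurs_before E x (npred (Suc m))"
begin

lemma insert_at_same_level:
  assumes "x \<in> set (insert_at k (Suc m) E)" "y \<in> set (insert_at k (Suc m) E)" "lev x = lev y" "x < y"
  shows "occurs_before (insert_at k (Suc m) E) x y"
proof (cases "y = Suc m")
  case True
  then have "x \<in> set E" using assms by auto
  then show ?thesis using level_top assms True occurs_before_insert_at_new_iff by auto
next
  case False
  then have "x \<in> set E" "y \<in> set E" using assms arrangement_invD(2)[OF inv] by auto
  then show ?thesis using arrangement_invD(3)[OF inv] assms by (simp add: occurs_before_insert_at)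
qed

lemma insert_at_next_level:
  assumes "x \<in> set (insert_at k (Suc m) E)" "y \<in> set (insert_at k (Suc m) E)" "lev y = Suc (lev x)"
  shows "occurs_before (insert_at k (Suc m) E) x y \<longleftrightarrow> x \<le> npred y"
proof (cases "y = Suc m")
  case True
  then have "x \<in> set E" "x \<noteq> Suc m" using assms by auto
  then show ?thesis using level_below assms True occurs_before_insert_at_new_iff by auto
next
  case False
  then have "y \<in> set E" using assms by auto
  then have "x \<noteq> Suc m" using levels_le assms by fastforce
  then show ?thesis
    using arrangement_invD(4)[OF inv] assms False by (auto simp: occurs_before_insert_at)
qed

lemma insert_at_top_level:
  assumes "occurs_before (insert_at k (Suc m) E) x y" "lev y = lev (Suc m)" "lev x \<noteq> lev (Suc m)"
  shows "x = npred y \<or> occurs_before (insert_at k (Suc m) E) x (npred y)"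
proof (cases "y = Suc m")
  case True
  moreover have "x \<noteq> Suc m" using assms by auto
  ultimately have "x \<in> set (take k E)" using assms occurs_before_insert_at_new_iff by auto
  then show ?thesis using run assms True by (auto simp: occurs_before_insert_at)
next
  case False
  moreover have "x \<noteq> Suc m" using assms by auto
  ultimately have before: "occurs_before E x y" using assms by (simp add: occurs_before_insert_at)
  then have "lev m = lev (Suc m)" using levels_le occurs_before_in_set assms(2) by fastforce
  then show ?thesis
    using arrangement_invD(5)[OF inv before] assms by (auto simp: occurs_before_insert_at)
qed

lemma arrangement_inv_insert_at: "arrangement_inv (Suc m) (insert_at k (Suc m) E)"
  using arrangement_invD(1,2)[OF inv] insert_at_same_level insert_at_next_level insert_at_top_level
  unfolding arrangement_inv_def by auto

end

lemma arrangement_inv_step_npred_zero: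
  assumes "npred (Suc m) = 0"
  shows "arrangement_inv (Suc m) (insert_at (insertion_point R (Suc m) (map lev E)) (Suc m) E)"
proof -
  have top: "lev (Suc m) = 0" using assms m by (simp add: level_eq)
  then have zero: "lev x = 0" if "x \<in> set E" for x using levels_le[OF that] by simp
  have "Ccount R (Suc m) = 0" using top by (simp add: Ccount_def)
  moreover have "takeWhile (\<lambda>y. y = 0) (map lev E) = map lev E"
    using zero by (auto simp: takeWhile_eq_all_conv)
  ultimately have "insertion_point R (Suc m) (map lev E) = length E"
    by (metis insertion_point_def run_end_def after_occ_def top drop0 length_map add_0)
  then show ?thesis using zero top by (intro arrangement_inv_insert_at) auto
qed

context
  fixes v assumes has_pred: "npred (Suc m) \<noteq> 0"
    and v: "v < length E" "E ! v = npred (Suc m)"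
begin

(* Elements of level lev (npred (Suc m)) occur in increasing order, so the C-th of them is
   npred (Suc m) itself. *)
lemma after_occ_npred:
  "after_occ (Ccount R (Suc m)) (lev (Suc m) - 1) (map lev E) = Suc v"
proof -
  note I = arrangement_invD[OF inv]
  let ?b = "lev (npred (Suc m))"
  have z: "Suc m \<in> {1..n}" using m by simp
  have "{y \<in> set (take v E). lev y = ?b} = {y \<in> set E. occurs_before E y (npred (Suc m)) \<and> lev y = ?b}"
    using occurs_before_nth_iff_take[OF I(1) v(1)] v by (auto dest: in_set_takeD)
  also have "\<dots> = {y \<in> {1..<npred (Suc m)}. lev y = ?b}"
    using occurs_before_same_level_iff[OF inv] I(2) nth_mem[OF v(1)] v(2) npred_less[OF z]
    by auto
  finally have "card {y \<in> set (take v E). lev y = ?b} = card {y \<in> {1..<npred (Suc m)}. lev y = ?b}"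
    by simp
  then show ?thesis
    using after_occ_map[OF I(1) v(1)] v(2) Ccount_eq[OF z has_pred] level_eq[OF z] has_pred by simp
qed

lemma insertion_point_eq_run_end:
  "insertion_point R (Suc m) (map lev E) = run_end (Suc v) (lev (Suc m)) (map lev E)"
  unfolding insertion_point_def after_occ_npred ..

lemma in_take_insertion_point_iff:
  assumes "lev x \<noteq> lev (Suc m)"
  shows "x \<in> set (take (insertion_point R (Suc m) (map lev E)) E) \<longleftrightarrow>
    x = npred (Suc m) \<or> occurs_before E x (npred (Suc m))"
proof -
  have "take (insertion_point R (Suc m) (map lev E)) E =
      take v E @ E ! v # takeWhile (\<lambda>y. lev y = lev (Suc m)) (drop (Suc v) E)"
    using v(1) by (simp add: insertion_point_eq_run_end take_run_end_map take_Suc_conv_app_nth)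
  then show ?thesis
    using assms v occurs_before_nth_iff_take[OF arrangement_invD(1)[OF inv] v(1)]
    by (auto dest: set_takeWhileD)
qed

lemma hd_drop_insertion_point_level:
  assumes "drop (insertion_point R (Suc m) (map lev E)) E \<noteq> []"
  shows "lev (hd (drop (insertion_point R (Suc m) (map lev E)) E)) \<noteq> lev (Suc m)"
  using assms hd_dropWhile[of "\<lambda>y. lev y = lev (Suc m)" "drop (Suc v) E"]
  by (simp add: insertion_point_eq_run_end drop_run_end_map)

lemma level_Suc_eq: "lev (Suc m) = Suc (lev (npred (Suc m)))"
  using level_eq[of "Suc m"] m has_pred by simp

lemma npred_in_take_insertion_point: "npred (Suc m) \<in> set (take (insertion_point R (Suc m) (map lev E)) E)"
  using in_take_insertion_point_iff level_Suc_eq by simp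

(* A top-level x beyond the insertion point would have npred x = npred (Suc m); the element
   ending the run of top-level letters would then lie between npred x and x. *)
lemma top_level_in_take_insertion_point:
  assumes x: "x \<in> set E" "lev x = lev (Suc m)"
  shows "x \<in> set (take (insertion_point R (Suc m) (map lev E)) E)"
proof (rule ccontr)
  note I = arrangement_invD[OF inv]
  let ?z = "Suc m" and ?k = "insertion_point R (Suc m) (map lev E)"
  assume "x \<notin> set (take ?k E)"
  then have x_drop: "x \<in> set (drop ?k E)" using x(1) by (metis append_take_drop_id Un_iff set_append)
  define d where "d = hd (drop ?k E)"
  have nonempty: "drop ?k E \<noteq> []" using x_drop by auto
  then have d_drop: "d \<in> set (drop ?k E)" unfolding d_def by (rule hd_in_set)
  have lev_d: "lev d \<noteq> lev ?z" unfolding d_def by (rule hd_drop_insertion_point_level[OF nonempty])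
  then have "x \<noteq> hd (drop ?k E)" using x(2) d_def by auto
  then have "occurs_before (drop ?k E) d x" unfolding d_def by (rule occurs_before_hd[OF x_drop])
  then have d_before_x: "occurs_before E d x" by (rule occurs_before_drop)
  have "npred ?z \<le> npred x"
    using I(4)[of "npred ?z" x] occurs_before_take_drop[OF npred_in_take_insertion_point x_drop] x
      level_Suc_eq nth_mem[OF v(1)] v(2) by auto
  moreover have "npred x \<le> npred ?z" using x I(2) m by (intro npred_mono) auto
  moreover have "lev m = lev ?z" using x levels_le by fastforce
  ultimately have "d = npred ?z \<or> occurs_before E d (npred ?z)"
    using I(5) d_before_x lev_d x by fastforce
  moreover have "occurs_before E (npred ?z) d"
    by (rule occurs_before_take_drop[OF npred_in_take_insertion_point d_drop])
  ultimately show False using occurs_before_asym[OF I(1)] by blast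
qed

lemma arrangement_inv_step_npred_pos:
  "arrangement_inv (Suc m) (insert_at (insertion_point R (Suc m) (map lev E)) (Suc m) E)"
proof (rule arrangement_inv_insert_at)
  show "x \<in> set (take (insertion_point R (Suc m) (map lev E)) E) \<longleftrightarrow> x \<le> npred (Suc m)"
    if "x \<in> set E" "Suc (lev x) = lev (Suc m)" for x
    using that in_take_insertion_point_iff v nth_mem[OF v(1)] level_Suc_eq
      occurs_before_same_level_iff[OF inv, of x "npred (Suc m)"] by fastforce
  show "x = npred (Suc m) \<or> occurs_before E x (npred (Suc m))"
    if "x \<in> set (take (insertion_point R (Suc m) (map lev E)) E)" "lev x \<noteq> lev (Suc m)" for x
    using that in_take_insertion_point_iff by blast
qed (rule top_level_in_take_insertion_point)

end

lemma arrangement_inv_step: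
  "arrangement_inv (Suc m) (insert_at (insertion_point R (Suc m) (map lev E)) (Suc m) E)"
proof (cases "npred (Suc m) = 0")
  case False
  have "npred (Suc m) \<in> set E"
    using False npred_less[of "Suc m"] m arrangement_invD(2)[OF inv] by auto
  then obtain v where "v < length E" "E ! v = npred (Suc m)" by (auto simp: in_set_conv_nth)
  with False show ?thesis by (rule arrangement_inv_step_npred_pos)
qed (rule arrangement_inv_step_npred_zero)

end

lemma arrangement_inv_arrangement: "1 \<le> m \<Longrightarrow> m \<le> n \<Longrightarrow> arrangement_inv m (arrangement R m)"
proof (induction m rule: nat_induct_at_least)
  case base
  then show ?case by (simp add: arrangement_inv_def)
next
  case (Suc m)
  then have "arrangement_inv (Suc m) (insert_at (insertion_point R (Suc m) (map lev (arrangement R m)))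
      (Suc m) (arrangement R m))"
    by (intro arrangement_inv_step) auto
  then show ?case using Suc.hyps by (cases m) auto
qed

lemma R_iff_level:
  assumes inv: "arrangement_inv n E" and x: "x \<in> {1..n}" and y: "y \<in> {1..n}"
  shows "R x y \<longleftrightarrow> lev x + 2 \<le> lev y \<or> lev y = Suc (lev x) \<and> occurs_before E x y"
proof -
  have lev_y: "lev y = (if npred y = 0 then 0 else Suc (lev (npred y)))" by (rule level_eq[OF y])
  consider "lev x + 2 \<le> lev y" | "lev y = Suc (lev x)" | "lev y \<le> lev x" by linarith
  then have "x \<le> npred y \<longleftrightarrow> lev x + 2 \<le> lev y \<or> lev y = Suc (lev x) \<and> occurs_before E x y"
  proof cases
    case 1
    then have "npred y \<noteq> 0" "lev x < lev (npred y)" using lev_y by (auto split: if_splits)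
    then have "x \<le> npred y" using x y npred_less[OF y] level_mono[of "npred y" x] by fastforce
    then show ?thesis using 1 by simp
  next
    case 2
    then show ?thesis using arrangement_invD(2,4)[OF inv] x y by auto
  next
    case 3
    have "\<not> x \<le> npred y"
    proof
      assume "x \<le> npred y"
      then have "npred y \<noteq> 0" "lev x \<le> lev (npred y)"
        using x y npred_less[OF y] by (auto intro: level_mono)
      then show False using lev_y 3 by simp
    qed
    then show ?thesis using 3 by auto
  qed
  then show ?thesis using x y by (simp add: R_iff)
qed

lemma length_arrangement_inv: "arrangement_inv m E \<Longrightarrow> length E = m"
  using arrangement_invD(1,2) distinct_card by fastforce

lemma arrangement_sorted_by_level:
  assumes inv: "arrangement_inv n E" and tu: "t < length E" "u < length E"
    and "lev (E ! t) < lev (E ! u) \<or> lev (E ! t) = lev (E ! u) \<and> t < u"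
  shows "E ! t < E ! u"
  using assms(4)
proof
  have "E ! t \<in> {1..n}" "E ! u \<in> {1..n}" using tu arrangement_invD(2)[OF inv] nth_mem by blast+
  then show "E ! t < E ! u" if "lev (E ! t) < lev (E ! u)"
    using that level_mono[of "E ! u" "E ! t"] by fastforce
next
  assume "lev (E ! t) = lev (E ! u) \<and> t < u"
  then show "E ! t < E ! u"
    using occurs_before_nth_iff[OF arrangement_invD(1)[OF inv] tu]
      occurs_before_same_level_iff[OF inv] tu by simp
qed

lemma Pw_inv_fU_iff:
  "\<forall>i \<in> {1..n}. \<forall>j \<in> {1..n}.
     Pw (qU n R) (inv_into {1..n} (fU n R) i) (inv_into {1..n} (fU n R) j) \<longleftrightarrow> R i j"
proof (cases "n = 0")
  case False
  define E where "E = arrangement R n"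
  have inv: "arrangement_inv n E" using False by (simp add: E_def arrangement_inv_arrangement)
  note I = arrangement_invD[OF inv]
  have len: "length E = n" by (rule length_arrangement_inv[OF inv])
  have q: "qU n R = map lev E" by (simp add: qU_def E_def qseq_eq_map_level_arrangement[OF level_one])
  have pos: "inv_into {1..n} (fU n R) (E ! u) = Suc u" if "u < n" for u
    using inv_into_fperm_map[OF I(1) _ arrangement_sorted_by_level[OF inv]] I(2) len that
    by (simp add: fU_def q)
  show ?thesis
  proof (intro ballI)
    fix i j assume i: "i \<in> {1..n}" and j: "j \<in> {1..n}"
    then obtain t u where tu: "t < n" "E ! t = i" "u < n" "E ! u = j"
      using I(2) len by (metis in_set_conv_nth)
    have "Pw (qU n R) (inv_into {1..n} (fU n R) i) (inv_into {1..n} (fU n R) j) \<longleftrightarrow>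
        Pw (map lev E) (Suc t) (Suc u)"
      using pos[of t] pos[of u] tu q by simp
    also have "\<dots> \<longleftrightarrow> lev i + 2 \<le> lev j \<or> lev j = Suc (lev i) \<and> t < u"
      using Pw_map_Suc_iff[of t E u lev] tu len by simp
    also have "t < u \<longleftrightarrow> occurs_before E i j"
      using occurs_before_nth_iff[OF I(1), of t u] tu len by simp
    also have "lev i + 2 \<le> lev j \<or> lev j = Suc (lev i) \<and> occurs_before E i j \<longleftrightarrow> R i j"
      using R_iff_level[OF inv i j] by simp
    finally show "Pw (qU n R) (inv_into {1..n} (fU n R) i) (inv_into {1..n} (fU n R) j) \<longleftrightarrow> R i j" .
  qed
qed simp

end

lemma unit_interval_order_imp_uio_npred:
  assumes "unit_interval_order n R"
  shows "uio_npred n R (\<lambda>j. Max (insert 0 {i. R i j}))"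
proof -
  obtain x :: "nat \<Rightarrow> real" where
    x_mono: "\<And>i j. 1 \<le> i \<Longrightarrow> i \<le> j \<Longrightarrow> j \<le> n \<Longrightarrow> x i \<le> x j" and
    R_x: "\<And>i j. R i j \<longleftrightarrow> i \<in> {1..n} \<and> j \<in> {1..n} \<and> x i + 1 < x j"
    using assms unfolding unit_interval_order_def by blast
  have less: "i < j" if "R i j" for i j
  proof (rule ccontr)
    assume "\<not> i < j"
    then have "x j \<le> x i" using that R_x x_mono[of j i] by auto
    then show False using that R_x by auto
  qed
  have fin: "finite (insert 0 {i. R i j})" for j
    by (rule finite_subset[of _ "{..j}"]) (auto dest: less)
  have down: "R i' j" if "R i j" "1 \<le> i'" "i' \<le> i" for i i' j
    using that R_x x_mono[of i' i] by auto
  show ?thesis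
  proof
    fix i j
    let ?M = "Max (insert 0 {i. R i j})"
    show "R i j \<longleftrightarrow> 1 \<le> i \<and> i \<le> ?M \<and> j \<in> {1..n}"
    proof
      assume "R i j"
      then show "1 \<le> i \<and> i \<le> ?M \<and> j \<in> {1..n}" using R_x Max_ge[OF fin] by auto
    next
      assume i: "1 \<le> i \<and> i \<le> ?M \<and> j \<in> {1..n}"
      have "?M \<in> insert 0 {i. R i j}" using Max_in[OF fin] by blast
      then have "R ?M j" using i by auto
      then show "R i j" using down i by blast
    qed
  next
    fix j assume "j \<in> {1..n}"
    then show "Max (insert 0 {i. R i j}) < j" using fin less by (simp add: Max_less_iff)
  next
    fix i j assume ij: "1 \<le> i" "i \<le> j" "j \<le> n"
    have "{k. R k i} \<subseteq> {k. R k j}"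
    proof
      fix k assume "k \<in> {k. R k i}"
      then show "k \<in> {k. R k j}" using R_x[of k i] R_x[of k j] x_mono[OF ij] ij by auto
    qed
    then show "Max (insert 0 {k. R k i}) \<le> Max (insert 0 {k. R k j})"
      using fin by (intro Max_mono) auto
  qed
qed

theorem mainTheorem5:
  fixes n :: nat and R :: "nat \<Rightarrow> nat \<Rightarrow> bool"
  assumes "unit_interval_order n R"
  shows "\<forall>i \<in> {1..n}. \<forall>j \<in> {1..n}.
           Pw (qU n R) (inv_into {1..n} (fU n R) i) (inv_into {1..n} (fU n R) j)
           \<longleftrightarrow> R i j"
proof -
  interpret uio_npred n R "\<lambda>j. Max (insert 0 {i. R i j})"
    using assms by (rule unit_interval_order_imp_uio_npred)
  show ?thesis by (rule Pw_inv_fU_iff)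
qed

end
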